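(* Let $t\in\mathbb{R}^K$ be fixed and let $\Lambda\subseteq\mathbb{R}^K\setminus\{0\}$ be an arbitrary (possibly infinite) set. For $\lambda\in\Lambda$ and $\varrho\in\mathbb{R}^N$ define $$f(\lambda,\varrho)=\frac{\max\left[0,\ \lambda^T\{t-\mu(\varrho)\}\right]^2}{\lambda^T\Sigma(\varrho)\lambda},\qquad g(\varrho)=\sup_{\lambda\in\Lambda}f(\lambda,\varrho).$$ Then $g$ is a convex function of $\varrho$ on the convex set $\mathcal{C}=\{\varrho\in\mathbb{R}^N:\Sigma(\varrho)\text{ is positive definite}\}$ (on which $g$ is finite).
   Context: There are $I$ strata; stratum $i$ contains $n_i\ge 2$ units, indexed $(i,j)$, $j=1,\dots,n_i$, and $N=\sum_{i=1}^I n_i$. Vectors in $\mathbb{R}^N$ are indexed lexicographically by $(i,j)$. There are $K$ outcomes, and for each unit $(i,j)$ and outcome $k$ there is a fixed real constant $q_{ijk}$. For $\varrho=(\varrho_{ij})\in\mathbb{R}^N$ define $\mu(\varrho)\in\mathbb{R}^K$ and the $K\times K$ matrix $\Sigma(\varrho)$ by $$\mu(\varrho)_k=\sum_{i=1}^I\sum_{j=1}^{n_i}q_{ijk}\varrho_{ij},\qquad \Sigma(\varrho)_{k\ell}=\sum_{i=1}^I\Big\{\sum_{j=1}^{n_i}q_{ijk}q_{ij\ell}\varrho_{ij}-\Big(\sum_{j=1}^{n_i}q_{ijk}\varrho_{ij}\Big)\Big(\sum_{j=1}^{n_i}q_{ij\ell}\varrho_{ij}\Big)\Big\}.$$ *)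

theory Defs
  imports "HOL-Analysis.Analysis"
begin

text \<open>Strata i < I, units j < n i of stratum i, outcomes indexed by the finite type 'k
  (so K = CARD('k)). A vector rho in R^N is a function rho i j (only i < I, j < n i matter).\<close>

definition mu :: "nat \<Rightarrow> (nat \<Rightarrow> nat) \<Rightarrow> (nat \<Rightarrow> nat \<Rightarrow> 'k \<Rightarrow> real)
    \<Rightarrow> (nat \<Rightarrow> nat \<Rightarrow> real) \<Rightarrow> real ^ 'k::finite" where
  "mu I n q rho = (\<chi> k. \<Sum>i<I. \<Sum>j<n i. q i j k * rho i j)"

definition Sigma_mat :: "nat \<Rightarrow> (nat \<Rightarrow> nat) \<Rightarrow> (nat \<Rightarrow> nat \<Rightarrow> 'k \<Rightarrow> real)
    \<Rightarrow> (nat \<Rightarrow> nat \<Rightarrow> real) \<Rightarrow> real ^ 'k ^ 'k::finite" where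
  "Sigma_mat I n q rho = (\<chi> k l. \<Sum>i<I.
      ((\<Sum>j<n i. q i j k * q i j l * rho i j)
       - (\<Sum>j<n i. q i j k * rho i j) * (\<Sum>j<n i. q i j l * rho i j)))"

definition pos_def_mat :: "real ^ 'k ^ 'k::finite \<Rightarrow> bool" where
  "pos_def_mat A \<longleftrightarrow> (\<forall>x. x \<noteq> 0 \<longrightarrow> x \<bullet> (A *v x) > 0)"

definition f_fun :: "nat \<Rightarrow> (nat \<Rightarrow> nat) \<Rightarrow> (nat \<Rightarrow> nat \<Rightarrow> 'k \<Rightarrow> real) \<Rightarrow> real ^ 'k
    \<Rightarrow> real ^ 'k::finite \<Rightarrow> (nat \<Rightarrow> nat \<Rightarrow> real) \<Rightarrow> real" where
  "f_fun I n q t lam rho =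
     (max 0 (lam \<bullet> (t - mu I n q rho)))\<^sup>2 / (lam \<bullet> (Sigma_mat I n q rho *v lam))"

definition g_fun :: "nat \<Rightarrow> (nat \<Rightarrow> nat) \<Rightarrow> (nat \<Rightarrow> nat \<Rightarrow> 'k \<Rightarrow> real) \<Rightarrow> real ^ 'k
    \<Rightarrow> (real ^ 'k::finite) set \<Rightarrow> (nat \<Rightarrow> nat \<Rightarrow> real) \<Rightarrow> real" where
  "g_fun I n q t Lam rho = (SUP lam\<in>Lam. f_fun I n q t lam rho)"

definition C_set :: "nat \<Rightarrow> (nat \<Rightarrow> nat) \<Rightarrow> (nat \<Rightarrow> nat \<Rightarrow> 'k::finite \<Rightarrow> real)
    \<Rightarrow> (nat \<Rightarrow> nat \<Rightarrow> real) set" where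
  "C_set I n q = {rho. pos_def_mat (Sigma_mat I n q rho)}"

end

theory Submission
  imports Defs
begin

text \<open>For fixed \<open>\<lambda>\<close> the numerator \<open>max 0 (\<lambda>\<^sup>T(t - \<mu>(\<rho>)))\<close> is a convex nonnegative
  function of \<open>\<rho>\<close>, since \<open>\<mu>\<close> is linear, while the denominator \<open>\<lambda>\<^sup>T\<Sigma>(\<rho>)\<lambda>\<close> is
  concave: it is a sum over strata of \<open>\<Sum>\<^sub>j a\<^sub>j\<^sup>2\<rho>\<^sub>j - (\<Sum>\<^sub>j a\<^sub>j\<rho>\<^sub>j)\<^sup>2\<close> with
  \<open>a\<^sub>j = \<lambda>\<^sup>Tq\<^sub>j\<close>, a linear function minus the square of a linear function. Since
  \<open>(p, s) \<mapsto> p\<^sup>2/s\<close> is jointly convex on \<open>s > 0\<close> and nonincreasing in \<open>s\<close>, each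
  \<open>f(\<lambda>, \<cdot>)\<close> is convex on \<open>\<C>\<close>, and so is their supremum, which is finite because
  \<open>f(\<lambda>, \<rho>) \<le> |t - \<mu>(\<rho>)|\<^sup>2 / m\<close> when \<open>m\<close> is the least eigenvalue of \<open>\<Sigma>(\<rho>)\<close>.\<close>

lemma convex_comb_pos:
  fixes a b u :: real
  assumes "0 < a" "0 < b" "0 \<le> u" "u \<le> 1"
  shows "0 < u * a + (1 - u) * b"
proof (cases "u = 0")
  case False
  with assms have "0 < u * a" "0 \<le> (1 - u) * b" by simp_all
  then show ?thesis by linarith
qed (use assms in simp)

lemma convex_comb_max_0_le:
  fixes a b u :: real
  assumes "0 \<le> u" "u \<le> 1"
  shows "max 0 (u * a + (1 - u) * b) \<le> u * max 0 a + (1 - u) * max 0 b"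
proof -
  have "u * a \<le> u * max 0 a" "(1 - u) * b \<le> (1 - u) * max 0 b"
    using assms by (simp_all add: mult_left_mono)
  moreover have "0 \<le> u * max 0 a" "0 \<le> (1 - u) * max 0 b"
    using assms by simp_all
  ultimately show ?thesis by linarith
qed

lemma convex_comb_square_div_le:
  fixes u p1 p2 s1 s2 :: real
  assumes "0 \<le> u" "u \<le> 1" "0 < s1" "0 < s2"
  shows "(u * p1 + (1 - u) * p2)\<^sup>2 / (u * s1 + (1 - u) * s2) \<le> u * p1\<^sup>2 / s1 + (1 - u) * p2\<^sup>2 / s2"
proof -
  define S where "S = u * s1 + (1 - u) * s2"
  have S: "0 < S"
    unfolding S_def using convex_comb_pos assms by blast
  have "S * (u * p1\<^sup>2 / s1 + (1 - u) * p2\<^sup>2 / s2) - (u * p1 + (1 - u) * p2)\<^sup>2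
      = u * (1 - u) * (p1 * s2 - p2 * s1)\<^sup>2 / (s1 * s2)"
    using assms by (simp add: S_def field_simps power2_eq_square)
  moreover have "0 \<le> u * (1 - u) * (p1 * s2 - p2 * s1)\<^sup>2 / (s1 * s2)"
    using assms by simp
  ultimately have "(u * p1 + (1 - u) * p2)\<^sup>2 \<le> S * (u * p1\<^sup>2 / s1 + (1 - u) * p2\<^sup>2 / s2)"
    by linarith
  with S show ?thesis
    by (simp add: S_def pos_divide_le_eq mult.commute)
qed

lemma convex_comb_square_minus_square_le:
  fixes u M1 M2 L1 L2 :: real
  assumes "0 \<le> u" "u \<le> 1"
  shows "u * (M1 - L1\<^sup>2) + (1 - u) * (M2 - L2\<^sup>2)
    \<le> (u * M1 + (1 - u) * M2) - (u * L1 + (1 - u) * L2)\<^sup>2"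
proof -
  have "(u * M1 + (1 - u) * M2) - (u * L1 + (1 - u) * L2)\<^sup>2
      = u * (M1 - L1\<^sup>2) + (1 - u) * (M2 - L2\<^sup>2) + u * (1 - u) * (L1 - L2)\<^sup>2"
    by (simp add: algebra_simps power2_eq_square)
  moreover have "0 \<le> u * (1 - u) * (L1 - L2)\<^sup>2"
    using assms by simp
  ultimately show ?thesis by linarith
qed

lemma cSUP_convex_comb_le:
  fixes F G H :: "'a \<Rightarrow> real"
  assumes "L \<noteq> {}" "0 \<le> u" "u \<le> 1" "bdd_above (G ` L)" "bdd_above (H ` L)"
    and "\<And>l. l \<in> L \<Longrightarrow> F l \<le> u * G l + (1 - u) * H l"
  shows "(SUP l\<in>L. F l) \<le> u * (SUP l\<in>L. G l) + (1 - u) * (SUP l\<in>L. H l)"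
proof (rule cSUP_least[OF assms(1)])
  fix l assume l: "l \<in> L"
  have "u * G l \<le> u * (SUP l\<in>L. G l)"
    using assms(2) by (intro mult_left_mono cSUP_upper[OF l assms(4)])
  moreover have "(1 - u) * H l \<le> (1 - u) * (SUP l\<in>L. H l)"
    using assms(3) by (intro mult_left_mono cSUP_upper[OF l assms(5)]) simp
  ultimately show "F l \<le> u * (SUP l\<in>L. G l) + (1 - u) * (SUP l\<in>L. H l)"
    using assms(6)[OF l] by linarith
qed

lemma sum_mult_convex_comb:
  "(\<Sum>j\<in>A. c j * (u * r1 j + v * r2 j)) = u * (\<Sum>j\<in>A. c j * r1 j) + v * (\<Sum>j\<in>A. c j * r2 j)"
  for u v :: real
  by (simp add: sum.distrib sum_distrib_left algebra_simps)

lemma pos_def_mat_quadratic_form_ge: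
  fixes A :: "real ^ 'k ^ 'k::finite"
  assumes "pos_def_mat A"
  obtains m where "m > 0" "\<And>x. m * (norm x)\<^sup>2 \<le> x \<bullet> (A *v x)"
proof -
  have cont: "continuous_on (sphere 0 1) (\<lambda>x::real^'k. x \<bullet> (A *v x))"
    by (rule continuous_on_inner[OF continuous_on_id matrix_vector_mult_linear_continuous_on])
  have "axis undefined 1 \<in> sphere (0::real^'k) 1"
    by (simp add: norm_axis_1)
  then obtain x0 where x0: "x0 \<in> sphere 0 1"
    and min: "\<And>y. y \<in> sphere 0 1 \<Longrightarrow> x0 \<bullet> (A *v x0) \<le> y \<bullet> (A *v y)"
    using continuous_attains_inf[OF compact_sphere _ cont] by blast
  have "x0 \<noteq> 0"
    using x0 by auto
  with assms have m: "0 < x0 \<bullet> (A *v x0)"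
    unfolding pos_def_mat_def by blast
  have "x0 \<bullet> (A *v x0) * (norm x)\<^sup>2 \<le> x \<bullet> (A *v x)" for x
  proof (cases "x = 0")
    case False
    define y where "y = (1 / norm x) *\<^sub>R x"
    have "y \<in> sphere 0 1" "x = norm x *\<^sub>R y"
      using False by (simp_all add: y_def)
    then have "x \<bullet> (A *v x) = y \<bullet> (A *v y) * (norm x)\<^sup>2"
      by (metis matrix_vector_mult_scaleR inner_scaleR_left inner_scaleR_right
          power2_eq_square mult.commute mult.left_commute)
    moreover have "x0 \<bullet> (A *v x0) \<le> y \<bullet> (A *v y)"
      using min \<open>y \<in> sphere 0 1\<close> .
    ultimately show ?thesis
      by (simp add: mult_right_mono)
  qed simp
  with m that show ?thesis by blast
qed

definition load :: "real ^ 'k::finite \<Rightarrow> (nat \<Rightarrow> nat \<Rightarrow> 'k \<Rightarrow> real) \<Rightarrow> nat \<Rightarrow> nat \<Rightarrow> real" where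
  "load x q i j = (\<Sum>k\<in>UNIV. x$k * q i j k)"

lemma quadratic_form_Sigma_mat:
  "x \<bullet> (Sigma_mat I n q rho *v x) =
     (\<Sum>i<I. (\<Sum>j<n i. (load x q i j)\<^sup>2 * rho i j) - (\<Sum>j<n i. load x q i j * rho i j)\<^sup>2)"
proof -
  have "x \<bullet> (Sigma_mat I n q rho *v x) = (\<Sum>i<I.
         (\<Sum>k\<in>UNIV. \<Sum>l\<in>UNIV. \<Sum>j<n i. x$k * x$l * q i j k * q i j l * rho i j)
       - (\<Sum>k\<in>UNIV. \<Sum>l\<in>UNIV. (x$k * (\<Sum>j<n i. q i j k * rho i j)) * (x$l * (\<Sum>j<n i. q i j l * rho i j))))"
    by (simp add: inner_vec_def matrix_vector_mult_def Sigma_mat_def sum_distrib_left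
        sum_subtractf right_diff_distrib mult_ac sum.swap[of _ UNIV "{..<I}"])
  also have "\<dots> = (\<Sum>i<I. (\<Sum>j<n i. (load x q i j)\<^sup>2 * rho i j) - (\<Sum>j<n i. load x q i j * rho i j)\<^sup>2)"
  proof (rule sum.cong[OF refl])
    fix i
    have "(\<Sum>k\<in>UNIV. \<Sum>l\<in>UNIV. \<Sum>j<n i. x$k * x$l * q i j k * q i j l * rho i j)
        = (\<Sum>j<n i. (load x q i j)\<^sup>2 * rho i j)"
      by (simp add: load_def power2_eq_square sum_distrib_left sum_distrib_right mult_ac
          sum.swap[of _ UNIV "{..<n i}"])
    moreover have "(\<Sum>j<n i. load x q i j * rho i j) = (\<Sum>k\<in>UNIV. x$k * (\<Sum>j<n i. q i j k * rho i j))"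
      by (simp add: load_def sum_distrib_left sum_distrib_right mult_ac sum.swap[of _ UNIV "{..<n i}"])
    ultimately show "(\<Sum>k\<in>UNIV. \<Sum>l\<in>UNIV. \<Sum>j<n i. x$k * x$l * q i j k * q i j l * rho i j)
       - (\<Sum>k\<in>UNIV. \<Sum>l\<in>UNIV. (x$k * (\<Sum>j<n i. q i j k * rho i j)) * (x$l * (\<Sum>j<n i. q i j l * rho i j)))
       = (\<Sum>j<n i. (load x q i j)\<^sup>2 * rho i j) - (\<Sum>j<n i. load x q i j * rho i j)\<^sup>2"
      by (simp add: power2_eq_square sum_product)
  qed
  finally show ?thesis .
qed

lemma mu_convex_comb:
  "mu I n q (\<lambda>i j. u * r1 i j + v * r2 i j) = u *\<^sub>R mu I n q r1 + v *\<^sub>R mu I n q r2"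
  by (simp add: vec_eq_iff mu_def sum.distrib sum_distrib_left algebra_simps)

lemma quadratic_form_Sigma_mat_concave:
  fixes u :: real
  assumes "0 \<le> u" "u \<le> 1"
  shows "u * (x \<bullet> (Sigma_mat I n q r1 *v x)) + (1 - u) * (x \<bullet> (Sigma_mat I n q r2 *v x))
     \<le> x \<bullet> (Sigma_mat I n q (\<lambda>i j. u * r1 i j + (1 - u) * r2 i j) *v x)"
proof -
  have "u * ((\<Sum>j<n i. (load x q i j)\<^sup>2 * r1 i j) - (\<Sum>j<n i. load x q i j * r1 i j)\<^sup>2)
      + (1 - u) * ((\<Sum>j<n i. (load x q i j)\<^sup>2 * r2 i j) - (\<Sum>j<n i. load x q i j * r2 i j)\<^sup>2)
    \<le> (\<Sum>j<n i. (load x q i j)\<^sup>2 * (u * r1 i j + (1 - u) * r2 i j))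
       - (\<Sum>j<n i. load x q i j * (u * r1 i j + (1 - u) * r2 i j))\<^sup>2" for i
    unfolding sum_mult_convex_comb by (rule convex_comb_square_minus_square_le[OF assms])
  then show ?thesis
    unfolding quadratic_form_Sigma_mat
    by (simp add: sum_distrib_left sum.distrib[symmetric] sum_mono del: sum.distrib)
qed

lemma C_set_convex:
  assumes "r1 \<in> C_set I n q" "r2 \<in> C_set I n q" "0 \<le> u" "u \<le> 1"
  shows "(\<lambda>i j. u * r1 i j + (1 - u) * r2 i j) \<in> C_set I n q"
  unfolding C_set_def pos_def_mat_def
proof (intro CollectI allI impI)
  fix x :: "real ^ 'a" assume "x \<noteq> 0"
  with assms(1,2) have "0 < x \<bullet> (Sigma_mat I n q r1 *v x)" "0 < x \<bullet> (Sigma_mat I n q r2 *v x)"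
    unfolding C_set_def pos_def_mat_def by blast+
  then have "0 < u * (x \<bullet> (Sigma_mat I n q r1 *v x)) + (1 - u) * (x \<bullet> (Sigma_mat I n q r2 *v x))"
    using assms(3,4) by (rule convex_comb_pos)
  then show "0 < x \<bullet> (Sigma_mat I n q (\<lambda>i j. u * r1 i j + (1 - u) * r2 i j) *v x)"
    using quadratic_form_Sigma_mat_concave[OF assms(3,4), of x I n q r1 r2] by linarith
qed

lemma f_fun_bounded:
  assumes "rho \<in> C_set I n q"
  obtains M where "\<And>lam. lam \<noteq> 0 \<Longrightarrow> f_fun I n q t lam rho \<le> M"
proof -
  obtain m where m: "m > 0" "\<And>x. m * (norm x)\<^sup>2 \<le> x \<bullet> (Sigma_mat I n q rho *v x)"
    using assms pos_def_mat_quadratic_form_ge unfolding C_set_def by blast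
  define w where "w = t - mu I n q rho"
  have "f_fun I n q t lam rho \<le> (norm w)\<^sup>2 / m" if "lam \<noteq> 0" for lam
  proof -
    have "max 0 (lam \<bullet> w) \<le> norm lam * norm w"
      using norm_cauchy_schwarz[of lam w] by simp
    then have "(max 0 (lam \<bullet> w))\<^sup>2 \<le> (norm lam * norm w)\<^sup>2"
      by (intro power_mono) auto
    moreover have "0 < m * (norm lam)\<^sup>2"
      using m that by simp
    ultimately have "f_fun I n q t lam rho \<le> (norm lam * norm w)\<^sup>2 / (m * (norm lam)\<^sup>2)"
      unfolding f_fun_def w_def[symmetric] by (intro frac_le m(2)) simp_all
    also have "\<dots> = (norm w)\<^sup>2 / m"
      using that by (simp add: power_mult_distrib)
    finally show ?thesis .
  qed
  then show ?thesis using that by blast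
qed

lemma f_fun_convex:
  fixes u :: real
  assumes r1: "r1 \<in> C_set I n q" and r2: "r2 \<in> C_set I n q" and lam: "lam \<noteq> 0"
    and u: "0 \<le> u" "u \<le> 1"
  shows "f_fun I n q t lam (\<lambda>i j. u * r1 i j + (1 - u) * r2 i j)
      \<le> u * f_fun I n q t lam r1 + (1 - u) * f_fun I n q t lam r2"
proof -
  define ru where "ru = (\<lambda>i j. u * r1 i j + (1 - u) * r2 i j)"
  define s where "s r = lam \<bullet> (Sigma_mat I n q r *v lam)" for r
  define p where "p r = max 0 (lam \<bullet> (t - mu I n q r))" for r
  have s: "0 < s r1" "0 < s r2"
    using r1 r2 lam unfolding s_def C_set_def pos_def_mat_def by blast+
  have s_conc: "u * s r1 + (1 - u) * s r2 \<le> s ru"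
    unfolding s_def ru_def by (rule quadratic_form_Sigma_mat_concave[OF u])
  have "lam \<bullet> (t - mu I n q ru) = u * (lam \<bullet> (t - mu I n q r1)) + (1 - u) * (lam \<bullet> (t - mu I n q r2))"
    unfolding ru_def mu_convex_comb by (simp add: algebra_simps)
  then have "p ru \<le> u * p r1 + (1 - u) * p r2"
    unfolding p_def using convex_comb_max_0_le[OF u] by simp
  then have "(p ru)\<^sup>2 \<le> (u * p r1 + (1 - u) * p r2)\<^sup>2"
    by (rule power_mono) (simp add: p_def)
  then have "(p ru)\<^sup>2 / s ru \<le> (u * p r1 + (1 - u) * p r2)\<^sup>2 / (u * s r1 + (1 - u) * s r2)"
    using convex_comb_pos[OF s u] s_conc by (intro frac_le) simp_all
  also have "\<dots> \<le> u * (p r1)\<^sup>2 / s r1 + (1 - u) * (p r2)\<^sup>2 / s r2"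
    by (rule convex_comb_square_div_le[OF u s])
  finally show ?thesis
    unfolding f_fun_def ru_def p_def s_def by simp
qed

theorem proposition1:
  fixes I :: nat and n :: "nat \<Rightarrow> nat" and q :: "nat \<Rightarrow> nat \<Rightarrow> 'k::finite \<Rightarrow> real"
    and t :: "real ^ 'k" and Lam :: "(real ^ 'k) set"
  assumes n_ge: "\<And>i. i < I \<Longrightarrow> n i \<ge> 2"
    and Lam_sub: "Lam \<subseteq> - {0}"
    and Lam_ne: "Lam \<noteq> {}"
  shows "(\<forall>rho\<in>C_set I n q. bdd_above ((\<lambda>lam. f_fun I n q t lam rho) ` Lam))
    \<and> (\<forall>r1\<in>C_set I n q. \<forall>r2\<in>C_set I n q. \<forall>u::real. 0 \<le> u \<and> u \<le> 1 \<longrightarrow>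
          (\<lambda>i j. u * r1 i j + (1 - u) * r2 i j) \<in> C_set I n q
        \<and> g_fun I n q t Lam (\<lambda>i j. u * r1 i j + (1 - u) * r2 i j)
            \<le> u * g_fun I n q t Lam r1 + (1 - u) * g_fun I n q t Lam r2)"
proof -
  have nonzero: "lam \<noteq> 0" if "lam \<in> Lam" for lam
    using that Lam_sub by auto
  have bdd: "bdd_above ((\<lambda>lam. f_fun I n q t lam rho) ` Lam)" if rho: "rho \<in> C_set I n q" for rho
  proof -
    obtain M where "\<And>lam. lam \<noteq> 0 \<Longrightarrow> f_fun I n q t lam rho \<le> M"
      using f_fun_bounded[OF rho] by blast
    with nonzero show ?thesis
      by (intro bdd_aboveI2) blast
  qed
  have g_convex: "g_fun I n q t Lam (\<lambda>i j. u * r1 i j + (1 - u) * r2 i j)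
      \<le> u * g_fun I n q t Lam r1 + (1 - u) * g_fun I n q t Lam r2"
    if r: "r1 \<in> C_set I n q" "r2 \<in> C_set I n q" and u: "0 \<le> u" "u \<le> 1" for r1 r2 u
    unfolding g_fun_def using Lam_ne u bdd[OF r(1)] bdd[OF r(2)] f_fun_convex[OF r _ u] nonzero
    by (intro cSUP_convex_comb_le) auto
  show ?thesis
    using bdd g_convex by (auto intro: C_set_convex)
qed

end
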